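(* For every integer $N>1$, the number of self-complementary achiral necklaces on $2N$ beads is even.
   Context: Here a necklace on $2N$ beads is a circular arrangement of $2N$ beads, each colored with one of two colors, modulo cyclic rotation. It is achiral if it coincides (up to rotation) with its mirror reflection, and self-complementary if it coincides (up to rotation) with the necklace obtained by swapping the two colors. *)

theory Defs
  imports Main
begin

text \<open>A binary word of length n is a bool list of length n (the two colours are
True/False).  A necklace is the orbit of a word under cyclic rotation.\<close>

definition rot_class :: "bool list \<Rightarrow> bool list set" where
  "rot_class w = {rotate k w | k. True}"

definition necklaces :: "nat \<Rightarrow> bool list set set" where
  "necklaces n = rot_class ` {w. length w = n}"

definition achiral :: "bool list set \<Rightarrow> bool" where
  "achiral C \<longleftrightarrow> rev ` C = C"

definition self_complementary :: "bool list set \<Rightarrow> bool" where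
  "self_complementary C \<longleftrightarrow> map Not ` C = C"

end

(*
  Call a binary word w an sc-antipalindrome if rev w = map Not w and map Not w is a rotation
  of w.  Let C be a self-complementary achiral necklace of even length n.  Then rev w is
  a rotation by some e of map Not w for w in C; e must be even, since for odd e the
  reflection fixes a bead, which would equal its complement.  Rotating w by e/2 gives an
  sc-antipalindrome in C.  Conversely, two sc-antipalindromes x = rotate k w in C satisfy
  rotate (2k) w = w, and a cyclic group of rotations has only one involution, so C
  contains exactly two of them, w and map Not w.  Hence the number of such necklaces
  is a(n)/2, where a(n) counts sc-antipalindromes of length n.

  An sc-antipalindrome of length 2N is rotated by N either to itself or to its complement,
  so it is v @ v with v an sc-antipalindrome or u @ map Not u with u a palindrome.  This
  gives a(2N) = 2^ceil(N/2) + a(N), and a(N) = 0 for odd N, so 4 divides a(2N) for N >= 2.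
*)
theory Submission
  imports Defs
begin

lemma rot_class_self: "w \<in> rot_class w"
  unfolding rot_class_def by (auto intro!: exI[of _ 0])

lemma rotate_inverse: "rotate (length w - k mod length w) (rotate k w) = w"
proof (cases "w = []")
  case False
  have "length w - k mod length w + k = length w * Suc (k div length w)"
    using False by (simp add: minus_mod_eq_mult_div [symmetric])
  then show ?thesis
    unfolding rotate_rotate by (metis mod_mult_self1_is_0 rotate_id)
qed simp

lemma inj_rotate: "inj (rotate k)"
  by (simp add: rotate_def inj_rotate1)

lemma rotate_rev_rotate: "rotate k (rev (rotate k w)) = rev w"
  using rotate_rev [of k "rotate k w"] by (simp add: rotate_inverse)

lemma rot_class_sym:
  assumes "x \<in> rot_class w"
  shows "w \<in> rot_class x"
proof -
  obtain k where "x = rotate k w" using assms unfolding rot_class_def by blast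
  then have "w = rotate (length w - k mod length w) x" by (simp add: rotate_inverse)
  then show ?thesis unfolding rot_class_def by blast
qed

lemma rot_class_subset: "x \<in> rot_class w \<Longrightarrow> rot_class x \<subseteq> rot_class w"
  unfolding rot_class_def by (auto simp: rotate_rotate)

lemma rot_class_eq_iff: "rot_class x = rot_class w \<longleftrightarrow> x \<in> rot_class w"
  using rot_class_self rot_class_subset rot_class_sym by blast

lemma map_rot_class: "map f ` rot_class w = rot_class (map f w)"
  unfolding rot_class_def by (auto simp: rotate_map)

lemma rev_rot_class: "rev ` rot_class w = rot_class (rev w)"
proof
  show "rev ` rot_class w \<subseteq> rot_class (rev w)"
  proof
    fix y assume "y \<in> rev ` rot_class w"
    then obtain k where "y = rev (rotate k w)" unfolding rot_class_def by blast
    then have "rev w = rotate k y" by (simp add: rotate_rev_rotate)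
    then have "rev w \<in> rot_class y" unfolding rot_class_def by blast
    then show "y \<in> rot_class (rev w)" by (rule rot_class_sym)
  qed
  show "rot_class (rev w) \<subseteq> rev ` rot_class w"
    unfolding rot_class_def by (auto simp: rotate_rev)
qed

lemma achiral_rot_class_iff: "achiral (rot_class w) \<longleftrightarrow> rev w \<in> rot_class w"
  unfolding achiral_def rev_rot_class rot_class_eq_iff ..

lemma self_complementary_rot_class_iff:
  "self_complementary (rot_class w) \<longleftrightarrow> map Not w \<in> rot_class w"
  unfolding self_complementary_def map_rot_class rot_class_eq_iff ..

lemma rotate_mult_period:
  assumes "rotate p w = w"
  shows "rotate (p * c) w = w"
proof (induction c)
  case (Suc c)
  have "rotate (p * Suc c) w = rotate p (rotate (p * c) w)" by (simp add: rotate_rotate)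
  then show ?case using Suc assms by simp
qed simp

lemma rotate_mod_period:
  assumes "rotate p w = w" and "m mod p = m' mod p"
  shows "rotate m w = rotate m' w"
proof -
  have "rotate n w = rotate (n mod p) w" for n
  proof -
    have "rotate n w = rotate (n mod p) (rotate (p * (n div p)) w)"
      by (simp add: rotate_rotate mod_mult_div_eq)
    then show ?thesis using rotate_mult_period [OF assms(1)] by simp
  qed
  then show ?thesis using assms(2) by metis
qed

lemma rotate_gcd_period:
  assumes "rotate p w = w" and "rotate q w = w"
  shows "rotate (gcd p q) w = w"
proof (cases "p = 0")
  case False
  then obtain x y where xy: "p * x = q * y + gcd p q" using bezout_nat by blast
  have "w = rotate (p * x) w" using rotate_mult_period [OF assms(1)] by simp
  also have "\<dots> = rotate (gcd p q) (rotate (q * y) w)" by (simp add: xy rotate_rotate add.commute)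
  also have "\<dots> = rotate (gcd p q) w" using rotate_mult_period [OF assms(2)] by simp
  finally show ?thesis by simp
qed (use assms in simp)

(* A cyclic group has at most one element of order two. *)
lemma rotate_order_two_unique:
  assumes "rotate (2 * a) w = w" and "rotate (2 * k) w = w" and "rotate a w \<noteq> w"
  shows "rotate k w = w \<or> rotate k w = rotate a w"
proof -
  define g where "g = gcd a k"
  have period: "rotate (2 * g) w = w"
    using rotate_gcd_period [OF assms(1,2)] by (simp add: g_def gcd_mult_distrib_nat)
  obtain a' k' where "a = g * a'" and "k = g * k'"
    unfolding g_def by (meson dvd_def gcd_dvd1 gcd_dvd2)
  then have a_mod: "a mod (2 * g) = g * (a' mod 2)" and k_mod: "k mod (2 * g) = g * (k' mod 2)"
    by (simp_all add: mult.commute [of 2] mod_mult_mult1)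
  have "a' mod 2 = 1"
  proof (rule ccontr)
    assume "a' mod 2 \<noteq> 1"
    then have "a mod (2 * g) = 0 mod (2 * g)" using a_mod by simp
    then have "rotate a w = rotate 0 w" by (rule rotate_mod_period [OF period])
    then show False using assms(3) by simp
  qed
  show ?thesis
  proof (cases "k' mod 2 = 0")
    case True
    then have "k mod (2 * g) = 0 mod (2 * g)" using k_mod by simp
    then have "rotate k w = rotate 0 w" by (rule rotate_mod_period [OF period])
    then show ?thesis by simp
  next
    case False
    then have "k' mod 2 = 1" by simp
    then have "k mod (2 * g) = a mod (2 * g)" using k_mod a_mod \<open>a' mod 2 = 1\<close> by simp
    then have "rotate k w = rotate a w" by (rule rotate_mod_period [OF period])
    then show ?thesis ..
  qed
qed

lemma map_Not_neq: "w \<noteq> [] \<Longrightarrow> map Not w \<noteq> w"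
  by (cases w) auto

lemma map_Not_eq_iff: "map Not x = map Not y \<longleftrightarrow> x = y"
  by (simp add: inj_def inj_map_eq_map)

lemma complement_rotation_twice:
  assumes "map Not w = rotate a w"
  shows "rotate (2 * a) w = w"
proof -
  have "rotate (2 * a) w = rotate a (map Not w)" using assms by (simp add: rotate_rotate mult_2)
  also have "\<dots> = map Not (rotate a w)" by (rule rotate_map)
  also have "\<dots> = w" using assms [symmetric] by (simp add: comp_def)
  finally show ?thesis .
qed

definition sc_antipalindromes :: "nat \<Rightarrow> bool list set" where
  "sc_antipalindromes n = {w. length w = n \<and> rev w = map Not w \<and> map Not w \<in> rot_class w}"

lemma finite_sc_antipalindromes: "finite (sc_antipalindromes n)"
  by (rule finite_subset [OF _ finite_lists_length_eq [of "UNIV :: bool set" n]])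
    (auto simp: sc_antipalindromes_def)

(* For odd e the reflection i -> n - 1 - e - i (mod n) fixes a position i. *)
lemma rev_neq_rotate_complement_odd:
  assumes "w \<noteq> []" and "even (length w)" and "odd e"
  shows "rev w \<noteq> rotate e (map Not w)"
proof
  assume twist: "rev w = rotate e (map Not w)"
  define n where "n = length w"
  define r where "r = e mod n"
  have "odd r" and "r < n"
    using assms by (simp_all add: n_def r_def dvd_mod_iff)
  then have "n = 2 * (n div 2)" and "r = 2 * (r div 2) + 1"
    using assms(2) unfolding n_def by simp_all
  define i where "i = n div 2 - Suc (r div 2)"
  have i: "i < n" and "r + i = n - Suc i"
    using \<open>r < n\<close> \<open>n = 2 * (n div 2)\<close> \<open>r = 2 * (r div 2) + 1\<close> unfolding i_def by linarith+
  have "(e + i) mod n = (r + i) mod n"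
    unfolding r_def by (rule mod_add_left_eq [symmetric])
  also have "\<dots> = n - Suc i" using \<open>r + i = n - Suc i\<close> i by simp
  finally have i_mirror: "(e + i) mod n = n - Suc i" .
  have "rev w ! i = w ! (n - Suc i)" using i by (simp add: n_def rev_nth)
  moreover have "rotate e (map Not w) ! i = (\<not> w ! (n - Suc i))"
    using i i_mirror by (simp add: n_def nth_rotate add.commute)
  ultimately show False using twist by simp
qed

lemma rot_class_contains_sc_antipalindrome:
  assumes "length w = n" and "even n" and "n > 0"
    and "rev w \<in> rot_class w" and "map Not w \<in> rot_class w"
  shows "\<exists>x \<in> sc_antipalindromes n. x \<in> rot_class w"
proof -
  obtain b where b: "rev w = rotate b w" using assms(4) unfolding rot_class_def by blast
  obtain a where a: "map Not w = rotate a w" using assms(5) unfolding rot_class_def by blast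
  define e where "e = b + (n - 1) * a"
  have "rotate e (map Not w) = rotate (b + n * a) w"
    using a assms(3) by (cases n) (simp_all add: e_def rotate_rotate algebra_simps)
  also have "\<dots> = rotate b w"
    by (rule rotate_mod_period [of n]) (simp_all add: assms(1))
  finally have twist: "rev w = rotate e (map Not w)" using b by simp
  then have "even e"
    using rev_neq_rotate_complement_odd assms(1-3) by blast
  then obtain k where "e = 2 * k" ..
  define x where "x = rotate k w"
  have "rotate k (rev x) = rev w" by (simp add: x_def rotate_rev_rotate)
  also have "\<dots> = rotate k (rotate k (map Not w))"
    using twist \<open>e = 2 * k\<close> by (simp add: rotate_rotate mult_2)
  also have "\<dots> = rotate k (map Not x)" by (simp add: x_def rotate_map)
  finally have "rev x = map Not x" by (simp add: inj_eq [OF inj_rotate])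
  have "x \<in> rot_class w" unfolding x_def rot_class_def by blast
  then have "rot_class x = rot_class w" by (simp add: rot_class_eq_iff)
  moreover have "map Not x \<in> rot_class (map Not w)"
    using \<open>x \<in> rot_class w\<close> map_rot_class by blast
  moreover have "rot_class (map Not w) = rot_class w"
    using assms(5) by (simp add: rot_class_eq_iff)
  ultimately have "map Not x \<in> rot_class x" by simp
  then have "x \<in> sc_antipalindromes n"
    using \<open>rev x = map Not x\<close> assms(1) by (simp add: sc_antipalindromes_def x_def)
  with \<open>x \<in> rot_class w\<close> show ?thesis ..
qed

lemma sc_antipalindrome_rotation_cases:
  assumes "w \<in> sc_antipalindromes n" and "x \<in> sc_antipalindromes n" and "x \<in> rot_class w"
  shows "x = w \<or> x = map Not w"
proof (cases "w = []")
  case False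
  obtain k where x: "x = rotate k w" using assms(3) unfolding rot_class_def by blast
  obtain a where a: "map Not w = rotate a w"
    using assms(1) unfolding sc_antipalindromes_def rot_class_def by blast
  have "rotate k (rotate k (map Not w)) = rotate k (map Not x)" by (simp add: x rotate_map)
  also have "\<dots> = rotate k (rev x)" using assms(2) by (simp add: sc_antipalindromes_def)
  also have "\<dots> = map Not w" using assms(1) by (simp add: x rotate_rev_rotate sc_antipalindromes_def)
  finally have "map Not (rotate (2 * k) w) = map Not w"
    by (simp add: rotate_rotate mult_2 rotate_map)
  then have "rotate (2 * k) w = w" by (simp only: map_Not_eq_iff)
  moreover have "rotate a w \<noteq> w" using a map_Not_neq [OF False] by simp
  ultimately show ?thesis
    using rotate_order_two_unique [OF complement_rotation_twice [OF a]] a x by auto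
qed (use assms in \<open>simp add: sc_antipalindromes_def\<close>)

lemma sc_antipalindromes_same_rot_class:
  assumes "w \<in> sc_antipalindromes n"
  shows "{x \<in> sc_antipalindromes n. rot_class x = rot_class w} = {w, map Not w}"
proof -
  have "map Not w \<in> rot_class w" using assms by (simp add: sc_antipalindromes_def)
  then have "w \<in> rot_class (map Not w)" by (rule rot_class_sym)
  then have "map Not w \<in> sc_antipalindromes n"
    using assms by (simp add: sc_antipalindromes_def rev_map comp_def)
  then show ?thesis
    using assms sc_antipalindrome_rotation_cases \<open>map Not w \<in> rot_class w\<close>
    by (auto simp: rot_class_eq_iff rot_class_self)
qed

lemma rot_class_image_sc_antipalindromes:
  assumes "even n" and "n > 0"
  shows "rot_class ` sc_antipalindromes n = {C \<in> necklaces n. achiral C \<and> self_complementary C}"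
proof
  show "rot_class ` sc_antipalindromes n \<subseteq> {C \<in> necklaces n. achiral C \<and> self_complementary C}"
    by (auto simp: sc_antipalindromes_def necklaces_def achiral_rot_class_iff
        self_complementary_rot_class_iff)
next
  show "{C \<in> necklaces n. achiral C \<and> self_complementary C} \<subseteq> rot_class ` sc_antipalindromes n"
  proof
    fix C assume "C \<in> {C \<in> necklaces n. achiral C \<and> self_complementary C}"
    then obtain w where "C = rot_class w" and "length w = n"
      and "rev w \<in> rot_class w" and "map Not w \<in> rot_class w"
      by (auto simp: necklaces_def achiral_rot_class_iff self_complementary_rot_class_iff)
    then obtain x where "x \<in> sc_antipalindromes n" and "x \<in> rot_class w"
      using rot_class_contains_sc_antipalindrome assms by blast
    then show "C \<in> rot_class ` sc_antipalindromes n"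
      using \<open>C = rot_class w\<close> by (auto simp: rot_class_eq_iff [symmetric])
  qed
qed

lemma card_eq_mult_card_image:
  assumes "finite A" and "\<And>y. y \<in> f ` A \<Longrightarrow> card {x \<in> A. f x = y} = k"
  shows "card A = k * card (f ` A)"
proof -
  have "\<And>x. x \<in> A \<Longrightarrow> {y \<in> f ` A. f x = y} = {f x}" by auto
  then have "card A = (\<Sum>x\<in>A. card {y \<in> f ` A. f x = y})" by simp
  also have "\<dots> = k * card (f ` A)"
    by (rule sum_multicount) (use assms in auto)
  finally show ?thesis .
qed

lemma card_sc_antipalindromes:
  assumes "even n" and "n > 0"
  shows "card (sc_antipalindromes n)
    = 2 * card {C \<in> necklaces n. achiral C \<and> self_complementary C}"
proof -
  have "card {x \<in> sc_antipalindromes n. rot_class x = C} = 2"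
    if C: "C \<in> rot_class ` sc_antipalindromes n" for C
  proof -
    obtain w where w: "w \<in> sc_antipalindromes n" and "C = rot_class w" using C by blast
    have "w \<noteq> []" using w assms(2) by (auto simp: sc_antipalindromes_def)
    then show ?thesis
      using map_Not_neq sc_antipalindromes_same_rot_class [OF w] \<open>C = rot_class w\<close>
      by (metis card_2_iff)
  qed
  then show ?thesis
    using card_eq_mult_card_image [OF finite_sc_antipalindromes]
      rot_class_image_sc_antipalindromes [OF assms] by metis
qed

lemma even_length_if_rev_eq_map_Not:
  assumes "rev w = map Not w"
  shows "even (length w)"
proof (rule ccontr)
  assume odd: "odd (length w)"
  define i where "i = length w div 2"
  have "i < length w" and "length w - Suc i = i" using odd unfolding i_def by presburger+
  then have "rev w ! i = w ! i" by (simp add: rev_nth)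
  moreover have "map Not w ! i = (\<not> w ! i)" using \<open>i < length w\<close> by simp
  ultimately show False using assms by simp
qed

lemma sc_antipalindromes_odd: "odd n \<Longrightarrow> sc_antipalindromes n = {}"
  using even_length_if_rev_eq_map_Not by (auto simp: sc_antipalindromes_def)

definition palindromes :: "nat \<Rightarrow> bool list set" where
  "palindromes n = {u. length u = n \<and> rev u = u}"

lemma rev_Cons_snoc_eq_iff: "rev (b # u @ [c]) = b # u @ [c] \<longleftrightarrow> c = b \<and> rev u = u"
  by auto

lemma palindromes_Suc_Suc:
  "palindromes (Suc (Suc n)) = (\<lambda>(b, u). b # u @ [b]) ` (UNIV \<times> palindromes n)"
proof
  show "palindromes (Suc (Suc n)) \<subseteq> (\<lambda>(b, u). b # u @ [b]) ` (UNIV \<times> palindromes n)"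
  proof
    fix w assume "w \<in> palindromes (Suc (Suc n))"
    then have len: "length w = Suc (Suc n)" and pal: "rev w = w"
      by (simp_all add: palindromes_def)
    obtain b v where v: "w = b # v" using len by (cases w) auto
    obtain u c where u: "v = u @ [c]" using len v by (cases v rule: rev_cases) auto
    have "c = b" and "rev u = u"
      using pal unfolding v u rev_Cons_snoc_eq_iff by simp_all
    moreover have "length u = n" using len v u by simp
    ultimately show "w \<in> (\<lambda>(b, u). b # u @ [b]) ` (UNIV \<times> palindromes n)"
      using v u by (intro image_eqI [where x = "(b, u)"]) (simp_all add: palindromes_def)
  qed
next
  show "(\<lambda>(b, u). b # u @ [b]) ` (UNIV \<times> palindromes n) \<subseteq> palindromes (Suc (Suc n))"
    by (auto simp: palindromes_def rev_Cons_snoc_eq_iff)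
qed

lemma card_palindromes: "card (palindromes n) = 2 ^ ((n + 1) div 2)"
proof (induction n rule: nat_induct2)
  case 0
  have "palindromes 0 = {[]}" by (auto simp: palindromes_def)
  then show ?case by simp
next
  case 1
  have "palindromes 1 = {[True], [False]}" by (auto simp: palindromes_def length_Suc_conv)
  then show ?case by simp
next
  case (step n)
  have "inj_on (\<lambda>(b, u). b # u @ [b]) (UNIV \<times> palindromes n)"
    by (auto simp: inj_on_def)
  then have "card (palindromes (Suc (Suc n))) = card (UNIV \<times> palindromes n :: (bool \<times> bool list) set)"
    by (simp add: palindromes_Suc_Suc card_image)
  then show ?case using step by (simp add: card_cartesian_product)
qed

lemma rotate_append_self: "rotate k (v @ v) = rotate k v @ rotate k v"
proof (induction k)
  case (Suc k)
  then show ?case by (cases "rotate k v") simp_all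
qed simp

lemma sc_antipalindrome_double_cases:
  assumes "w \<in> sc_antipalindromes (2 * N)" and "N > 0"
  obtains (palindrome) u where "u \<in> palindromes N" and "w = u @ map Not u"
    | (square) v where "v \<in> sc_antipalindromes N" and "w = v @ v"
proof -
  have len: "length w = 2 * N" and anti: "rev w = map Not w" and "map Not w \<in> rot_class w"
    using assms(1) by (simp_all add: sc_antipalindromes_def)
  then obtain a where a: "map Not w = rotate a w" unfolding rot_class_def by blast
  have "w \<noteq> []" using len assms(2) by auto
  then have "rotate a w \<noteq> w" using a map_Not_neq by metis
  moreover have "rotate (2 * N) w = w" using len by simp
  ultimately have half: "rotate N w = w \<or> rotate N w = map Not w"
    using rotate_order_two_unique [OF complement_rotation_twice [OF a]] a by metis
  define u y where "u = take N w" and "y = drop N w"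
  have w: "w = u @ y" and "length u = N" and "length y = N"
    using len by (simp_all add: u_def y_def)
  then have rot: "rotate N w = y @ u" by (metis rotate_append)
  from half show thesis
  proof
    assume "rotate N w = w"
    then have "y @ u = u @ y" using rot w by simp
    then have "y = u" using \<open>length u = N\<close> \<open>length y = N\<close> by (metis append_eq_append_conv)
    then have uu: "w = u @ u" using w by simp
    have "rev u = map Not u" using anti unfolding uu by (simp add: append_eq_append_conv)
    moreover have "map Not u = rotate a u"
      using a unfolding uu by (simp add: rotate_append_self append_eq_append_conv)
    ultimately have "u \<in> sc_antipalindromes N"
      using \<open>length u = N\<close> by (auto simp: sc_antipalindromes_def rot_class_def)
    then show thesis using square uu by blast
  next
    assume "rotate N w = map Not w"
    then have "y @ u = map Not u @ map Not y" using rot w by simp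
    then have "y = map Not u"
      using \<open>length u = N\<close> \<open>length y = N\<close> by (metis append_eq_append_conv length_map)
    then have u_neg: "w = u @ map Not u" using w by simp
    have "rev u = u" using anti unfolding u_neg by (simp add: append_eq_append_conv rev_map comp_def)
    then have "u \<in> palindromes N" using \<open>length u = N\<close> by (simp add: palindromes_def)
    then show thesis using palindrome u_neg by blast
  qed
qed

lemma inj_on_append_same_length:
  assumes "\<And>u. u \<in> A \<Longrightarrow> length u = n"
  shows "inj_on (\<lambda>u. u @ f u) A"
  using assms by (auto intro!: inj_onI simp: append_eq_append_conv)

lemma sc_antipalindromes_double:
  assumes "N > 0"
  shows "sc_antipalindromes (2 * N)
    = (\<lambda>u. u @ map Not u) ` palindromes N \<union> (\<lambda>v. v @ v) ` sc_antipalindromes N"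
proof
  show "sc_antipalindromes (2 * N)
    \<subseteq> (\<lambda>u. u @ map Not u) ` palindromes N \<union> (\<lambda>v. v @ v) ` sc_antipalindromes N"
  proof
    fix w assume "w \<in> sc_antipalindromes (2 * N)"
    then show "w \<in> (\<lambda>u. u @ map Not u) ` palindromes N \<union> (\<lambda>v. v @ v) ` sc_antipalindromes N"
      by (cases rule: sc_antipalindrome_double_cases [OF _ assms]) auto
  qed
next
  have "u @ map Not u \<in> sc_antipalindromes (2 * N)" if "u \<in> palindromes N" for u
  proof -
    have "map Not (u @ map Not u) = rotate N (u @ map Not u)"
      using that rotate_append [of u "map Not u"] by (simp add: palindromes_def comp_def)
    then have "map Not (u @ map Not u) \<in> rot_class (u @ map Not u)"
      unfolding rot_class_def by blast
    then show ?thesis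
      using that by (simp add: sc_antipalindromes_def palindromes_def rev_map comp_def)
  qed
  moreover have "v @ v \<in> sc_antipalindromes (2 * N)" if v: "v \<in> sc_antipalindromes N" for v
  proof -
    obtain k where "map Not v = rotate k v"
      using v unfolding sc_antipalindromes_def rot_class_def by blast
    then have "map Not (v @ v) = rotate k (v @ v)" by (simp add: rotate_append_self)
    then show ?thesis using v by (auto simp: sc_antipalindromes_def rot_class_def)
  qed
  ultimately show "(\<lambda>u. u @ map Not u) ` palindromes N \<union> (\<lambda>v. v @ v) ` sc_antipalindromes N
    \<subseteq> sc_antipalindromes (2 * N)" by blast
qed

lemma card_sc_antipalindromes_double:
  assumes "N > 0"
  shows "card (sc_antipalindromes (2 * N)) = 2 ^ ((N + 1) div 2) + card (sc_antipalindromes N)"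
proof -
  have len_P: "\<And>u. u \<in> palindromes N \<Longrightarrow> length u = N"
    and len_S: "\<And>v. v \<in> sc_antipalindromes N \<Longrightarrow> length v = N"
    by (simp_all add: palindromes_def sc_antipalindromes_def)
  have "finite (palindromes N)"
    by (rule finite_subset [OF _ finite_lists_length_eq [of "UNIV :: bool set" N]]) (use len_P in auto)
  moreover have "(\<lambda>u. u @ map Not u) ` palindromes N \<inter> (\<lambda>v. v @ v) ` sc_antipalindromes N = {}"
  proof (rule ccontr)
    assume "(\<lambda>u. u @ map Not u) ` palindromes N \<inter> (\<lambda>v. v @ v) ` sc_antipalindromes N \<noteq> {}"
    then obtain u v where "u \<in> palindromes N" and "v \<in> sc_antipalindromes N"
      and eq: "u @ map Not u = v @ v" by blast
    then have "length u = length v" using len_P len_S by simp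
    then have "u = v" and "map Not u = v" using eq by (metis append_eq_append_conv)+
    moreover have "u \<noteq> []" using \<open>u \<in> palindromes N\<close> len_P assms by fastforce
    ultimately show False using map_Not_neq by metis
  qed
  ultimately have "card (sc_antipalindromes (2 * N))
      = card ((\<lambda>u. u @ map Not u) ` palindromes N) + card ((\<lambda>v. v @ v) ` sc_antipalindromes N)"
    unfolding sc_antipalindromes_double [OF assms]
    by (intro card_Un_disjoint) (simp_all add: finite_sc_antipalindromes)
  also have "\<dots> = card (palindromes N) + card (sc_antipalindromes N)"
    using inj_on_append_same_length [OF len_P, where f = "map Not"]
      inj_on_append_same_length [OF len_S, where f = "\<lambda>v. v"]
    by (simp add: card_image)
  finally show ?thesis by (simp add: card_palindromes)
qed

lemma four_dvd_card_sc_antipalindromes: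
  assumes "N \<ge> 2"
  shows "4 dvd card (sc_antipalindromes (2 * N))"
  using assms
proof (induction N rule: less_induct)
  case (less N)
  have recurrence: "card (sc_antipalindromes (2 * N)) = 2 ^ ((N + 1) div 2) + card (sc_antipalindromes N)"
    using less.prems by (simp add: card_sc_antipalindromes_double)
  consider "N = 2" | "N \<ge> 3" using less.prems by linarith
  then show ?case
  proof cases
    case 1
    have "card (sc_antipalindromes 2) = 2"
      using card_sc_antipalindromes_double [of 1] sc_antipalindromes_odd [of 1] by simp
    then show ?thesis using recurrence 1 by simp
  next
    case 2
    have "(2::nat) ^ 2 dvd 2 ^ ((N + 1) div 2)" by (rule le_imp_power_dvd) (use 2 in simp)
    moreover have "4 dvd card (sc_antipalindromes N)"
    proof (cases "even N")
      case True
      then obtain M where "N = 2 * M" ..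
      then show ?thesis using less.IH [of M] 2 by simp
    qed (simp add: sc_antipalindromes_odd)
    ultimately show ?thesis using recurrence by simp
  qed
qed

theorem lemma2p3:
  fixes N :: nat
  assumes "N > 1"
  shows "even (card {C \<in> necklaces (2 * N). achiral C \<and> self_complementary C})"
proof -
  have "card (sc_antipalindromes (2 * N))
      = 2 * card {C \<in> necklaces (2 * N). achiral C \<and> self_complementary C}"
    using assms by (intro card_sc_antipalindromes) simp_all
  moreover have "4 dvd card (sc_antipalindromes (2 * N))"
    using assms by (intro four_dvd_card_sc_antipalindromes) simp
  ultimately show ?thesis by presburger
qed

end
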